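(* Let $G$ be an $n$-vertex digraph which is an orientation of a connected simple graph containing exactly one cycle, and suppose $G$ has no sources. Then $G$ has a quasi-kernel with at most $\frac{n+2}{3}$ vertices. Moreover, the bound is sharp: for every $n\ge 4$ with $n\equiv 1\pmod 3$, the cyclically oriented cycle on $n$ vertices has no quasi-kernel with fewer than $\frac{n+2}{3}$ vertices.
   Context: Digraphs are finite, without loops and without multiple edges in the same direction. A source is a vertex of in-degree $0$. For $V'\subseteq V(G)$, $\Gamma^+(V')$ is the set of out-neighbours of vertices of $V'$ and $\Gamma^+_2(V')=V'\cup\Gamma^+(V')\cup\Gamma^+(\Gamma^+(V'))$. A quasi-kernel is an independent set $Q$ with $\Gamma^+_2(Q)=V(G)$. *)

theory Defs
  imports Main
begin

definition digraph :: "'a set \<Rightarrow> ('a \<times> 'a) set \<Rightarrow> bool" where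
  "digraph V A \<longleftrightarrow> finite V \<and> A \<subseteq> V \<times> V \<and> (\<forall>v. (v, v) \<notin> A)"

definition source :: "'a set \<Rightarrow> ('a \<times> 'a) set \<Rightarrow> 'a \<Rightarrow> bool" where
  "source V A v \<longleftrightarrow> v \<in> V \<and> (\<forall>u. (u, v) \<notin> A)"

definition out_nbrs :: "('a \<times> 'a) set \<Rightarrow> 'a set \<Rightarrow> 'a set" where
  "out_nbrs A S = {v. \<exists>u\<in>S. (u, v) \<in> A}"

definition Gamma2 :: "('a \<times> 'a) set \<Rightarrow> 'a set \<Rightarrow> 'a set" where
  "Gamma2 A S = S \<union> out_nbrs A S \<union> out_nbrs A (out_nbrs A S)"

definition independent :: "('a \<times> 'a) set \<Rightarrow> 'a set \<Rightarrow> bool" where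
  "independent A Q \<longleftrightarrow> (\<forall>u\<in>Q. \<forall>v\<in>Q. (u, v) \<notin> A)"

definition quasi_kernel :: "'a set \<Rightarrow> ('a \<times> 'a) set \<Rightarrow> 'a set \<Rightarrow> bool" where
  "quasi_kernel V A Q \<longleftrightarrow> Q \<subseteq> V \<and> independent A Q \<and> Gamma2 A Q = V"

definition oriented :: "('a \<times> 'a) set \<Rightarrow> bool" where
  "oriented A \<longleftrightarrow> (\<forall>u v. (u, v) \<in> A \<longrightarrow> (v, u) \<notin> A)"

definition uadj :: "('a \<times> 'a) set \<Rightarrow> 'a \<Rightarrow> 'a \<Rightarrow> bool" where
  "uadj A u v \<longleftrightarrow> (u, v) \<in> A \<or> (v, u) \<in> A"

definition uconnected :: "'a set \<Rightarrow> ('a \<times> 'a) set \<Rightarrow> bool" where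
  "uconnected V A \<longleftrightarrow> V \<noteq> {} \<and> (\<forall>u\<in>V. \<forall>v\<in>V. (u, v) \<in> (A \<union> A\<inverse>)\<^sup>*)"

definition is_ucycle :: "('a \<times> 'a) set \<Rightarrow> 'a list \<Rightarrow> bool" where
  "is_ucycle A cs \<longleftrightarrow> length cs \<ge> 3 \<and> distinct cs \<and>
     (\<forall>i < length cs. uadj A (cs ! i) (cs ! ((i + 1) mod length cs)))"

text \<open>The edge set of a cycle (a cycle as a subgraph is determined by its edges).\<close>
definition cycle_edges :: "'a list \<Rightarrow> 'a set set" where
  "cycle_edges cs = {{cs ! i, cs ! ((i + 1) mod length cs)} | i. i < length cs}"

definition unique_cycle :: "('a \<times> 'a) set \<Rightarrow> bool" where
  "unique_cycle A \<longleftrightarrow> card {cycle_edges cs | cs. is_ucycle A cs} = 1"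

definition cyc_arcs :: "nat \<Rightarrow> (nat \<times> nat) set" where
  "cyc_arcs n = {(i, (i + 1) mod n) | i. i < n}"

end

theory Submission
  imports Defs "HOL-Combinatorics.Orbits"
begin

text \<open>Choosing an in-neighbour \<open>p v\<close> of every vertex \<open>v\<close> gives a map whose functional graph
  contains a cycle; since the underlying graph has only one cycle, every arc is of the form
  \<open>(p v, v)\<close>, so \<open>G\<close> is a directed cycle with out-trees attached to it. Label every vertex by
  its distance along \<open>p\<close> to a fixed vertex \<open>c\<close> of the cycle: modulo 3 the label increases by
  one along every arc except possibly at \<open>c\<close>, and after a correction on one subtree the
  cycle can always be closed with at most two non-adjacent defect vertices, where the label
  increases by two. For each residue \<open>j\<close>, the vertices labelled \<open>j\<close> together with the defect
  vertices labelled \<open>j - 2\<close> form a quasi-kernel, and the three classes have total size at most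
  \<open>n + 2\<close>.

  For the sharpness part, a vertex of the directed \<open>n\<close>-cycle reaches only itself and its two
  successors within two steps, so \<open>3 |Q| \<ge> n\<close>, and \<open>n \<equiv> 1 (mod 3)\<close> forces \<open>3 |Q| \<ge> n + 2\<close>.\<close>

lemma is_ucycleI:
  assumes "3 \<le> length cs" "distinct cs" "successively (uadj A) cs" "uadj A (last cs) (hd cs)"
  shows "is_ucycle A cs"
  unfolding is_ucycle_def
proof (intro conjI allI impI)
  fix i assume i: "i < length cs"
  show "uadj A (cs ! i) (cs ! ((i + 1) mod length cs))"
  proof (cases "Suc i < length cs")
    case True
    then show ?thesis using successively_nth[OF assms(3) True] by simp
  next
    case False
    with i have "Suc i = length cs" by simp
    then have "i = length cs - 1" "(i + 1) mod length cs = 0" "cs \<noteq> []" by auto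
    with assms(4) show ?thesis by (simp add: last_conv_nth hd_conv_nth)
  qed
qed (use assms(1,2) in simp_all)

lemma cycle_edges_conv:
  "cycle_edges cs = (\<lambda>i. {cs ! i, cs ! ((i + 1) mod length cs)}) ` {..<length cs}"
  unfolding cycle_edges_def by blast

lemma last_hd_in_cycle_edges:
  assumes "cs \<noteq> []"
  shows "{last cs, hd cs} \<in> cycle_edges cs"
proof -
  let ?n = "length cs"
  have "{cs ! (?n - 1), cs ! ((?n - 1 + 1) mod ?n)} \<in> cycle_edges cs"
    unfolding cycle_edges_conv using assms by (intro imageI) simp
  moreover have "(?n - 1 + 1) mod ?n = 0" using assms by simp
  ultimately show ?thesis using assms by (simp add: last_conv_nth hd_conv_nth)
qed

lemma funpow_apply_pred:
  "0 < n \<Longrightarrow> f ((f ^^ (n - 1)) x) = (f ^^ n) x"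
  by (metis Suc_diff_1 funpow.simps(2) o_apply)

lemma distinct_funpow_prefix:
  fixes f :: "'a \<Rightarrow> 'a"
  assumes "\<And>m. m < n \<Longrightarrow> (f ^^ m) x \<noteq> (f ^^ n) x"
  shows "distinct (map (\<lambda>i. (f ^^ i) x) [0..<Suc n])"
  unfolding distinct_map
proof (intro conjI distinct_upt inj_onI, rule ccontr)
  have shift: False if "i < j" "j \<le> n" "(f ^^ i) x = (f ^^ j) x" for i j
  proof -
    have "(f ^^ (n - j + i)) x = (f ^^ (n - j)) ((f ^^ i) x)"
      by (simp add: funpow_add)
    also have "\<dots> = (f ^^ (n - j + j)) x"
      using that(3) by (simp add: funpow_add)
    also have "\<dots> = (f ^^ n) x"
      using that(2) by simp
    finally show False using assms[of "n - j + i"] that(1,2) by linarith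
  qed
  fix i j assume "i \<in> set [0..<Suc n]" "j \<in> set [0..<Suc n]" "(f ^^ i) x = (f ^^ j) x" "i \<noteq> j"
  then show False using shift[of i j] shift[of j i] by (auto simp: less_Suc_eq_le linorder_neq_iff)
qed

lemma distinct_paths_to_first_meet:
  fixes f :: "'a \<Rightarrow> 'a"
  assumes meet: "(f ^^ a) v = (f ^^ b) u"
    and first: "\<And>i j. (f ^^ i) v = (f ^^ j) u \<Longrightarrow> a + b \<le> i + j"
  shows "distinct (map (\<lambda>i. (f ^^ i) u) [0..<Suc b] @ rev (map (\<lambda>i. (f ^^ i) v) [0..<a]))"
proof -
  have "distinct (map (\<lambda>i. (f ^^ i) u) [0..<Suc b])"
  proof (rule distinct_funpow_prefix)
    fix m assume "m < b"
    then show "(f ^^ m) u \<noteq> (f ^^ b) u" using first[of a m] meet by fastforce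
  qed
  moreover have "distinct (map (\<lambda>i. (f ^^ i) v) [0..<a])"
  proof (cases a)
    case (Suc a')
    have "(f ^^ m) v \<noteq> (f ^^ a') v" if "m < a'" for m
    proof
      assume "(f ^^ m) v = (f ^^ a') v"
      then have "(f ^^ Suc m) v = (f ^^ b) u" using meet Suc by simp
      then show False using first[of "Suc m" b] that Suc by simp
    qed
    then have "distinct (map (\<lambda>i. (f ^^ i) v) [0..<Suc a'])" by (rule distinct_funpow_prefix)
    then show ?thesis unfolding Suc .
  qed simp
  moreover have "(f ^^ j) u \<noteq> (f ^^ i) v" if "j < Suc b" "i < a" for i j
    using first[of i j] that by fastforce
  ultimately show ?thesis by auto
qed

definition orbit_list :: "('a \<Rightarrow> 'a) \<Rightarrow> 'a \<Rightarrow> 'a list" where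
  "orbit_list f y = map (\<lambda>n. (f ^^ n) y) [0..<funpow_dist1 f y y]"

lemma orbit_list_conv:
  "orbit_list f y = map (\<lambda>n. (f ^^ n) y) [0..<k]" if "k = funpow_dist1 f y y"
  using that unfolding orbit_list_def by (simp del: upt_Suc)

lemma distinct_orbit_list:
  assumes "y \<in> orbit f y"
  shows "distinct (orbit_list f y)"
proof -
  define k where "k = funpow_dist1 f y y"
  show ?thesis
    using inj_on_funpow_dist1[OF assms] unfolding orbit_list_conv[OF k_def] distinct_map k_def[symmetric]
    by simp
qed

lemma cycle_edges_orbit_list:
  assumes "y \<in> orbit f y"
  shows "cycle_edges (orbit_list f y) = (\<lambda>z. {z, f z}) ` orbit f y"
proof -
  define k where "k = funpow_dist1 f y y"
  have period: "(f ^^ k) y = y" "0 < k" using funpow_dist1_prop[OF assms] by (simp_all add: k_def)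
  have step: "(f ^^ (Suc i mod k)) y = f ((f ^^ i) y)" if "i < k" for i
    using that period by (auto simp: mod_Suc)
  have "cycle_edges (orbit_list f y) = (\<lambda>i. {(f ^^ i) y, f ((f ^^ i) y)}) ` {..<k}"
    unfolding cycle_edges_conv orbit_list_conv[OF k_def] using step by (intro image_cong) simp_all
  also have "\<dots> = (\<lambda>z. {z, f z}) ` orbit f y"
    unfolding orbit_altdef_bounded[OF period] by auto
  finally show ?thesis .
qed

definition defect_labelling :: "'a set \<Rightarrow> ('a \<Rightarrow> 'a) \<Rightarrow> 'a set \<Rightarrow> ('a \<Rightarrow> nat) \<Rightarrow> bool" where
  "defect_labelling V p S l \<longleftrightarrow> S \<subseteq> V \<and>
     (\<forall>v\<in>V - S. l v mod 3 = (l (p v) + 1) mod 3) \<and>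
     (\<forall>v\<in>S. l v mod 3 = (l (p v) + 2) mod 3 \<and> p v \<notin> S)"

definition label_class :: "'a set \<Rightarrow> 'a set \<Rightarrow> ('a \<Rightarrow> nat) \<Rightarrow> nat \<Rightarrow> 'a set" where
  "label_class V S l j = {v\<in>V. l v mod 3 = j} \<union> {v\<in>S. (l v + 2) mod 3 = j}"

lemma mem_label_class:
  "v \<in> label_class V S l j \<longleftrightarrow> v \<in> V \<and> l v mod 3 = j \<or> v \<in> S \<and> (l v + 2) mod 3 = j"
  unfolding label_class_def by blast

lemma quasi_kernel_label_class:
  assumes AV: "A \<subseteq> V \<times> V"
    and parent: "\<And>v. v \<in> V \<Longrightarrow> (p v, v) \<in> A"
    and only_parent: "\<And>u v. (u, v) \<in> A \<Longrightarrow> u = p v"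
    and lab: "defect_labelling V p S l" and "j < 3"
  shows "quasi_kernel V A (label_class V S l j)"
proof -
  let ?Q = "label_class V S l j"
  have S: "S \<subseteq> V" "\<And>v. v \<in> S \<Longrightarrow> l v mod 3 = (l (p v) + 2) mod 3 \<and> p v \<notin> S"
    and step: "\<And>v. v \<in> V \<Longrightarrow> v \<notin> S \<Longrightarrow> l v mod 3 = (l (p v) + 1) mod 3"
    using lab unfolding defect_labelling_def by auto
  have pV: "p v \<in> V" if "v \<in> V" for v using parent[OF that] AV by blast
  have QV: "?Q \<subseteq> V" using S(1) unfolding label_class_def by blast
  have "\<not> (p v \<in> ?Q \<and> v \<in> ?Q)" if "v \<in> V" for v
  proof (cases "v \<in> S")
    case True
    then show ?thesis using S(2)[OF True] unfolding mem_label_class by (auto simp: mod_Suc)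
  next
    case False
    then show ?thesis using step[OF that False] unfolding mem_label_class by (auto simp: mod_Suc)
  qed
  then have "independent A ?Q"
    unfolding independent_def using only_parent AV by blast
  moreover have "v \<in> ?Q \<or> p v \<in> ?Q \<or> p (p v) \<in> ?Q" if "v \<in> V" for v
  proof (cases "v \<in> S")
    case True
    then show ?thesis
      using S(2)[OF True] step[OF pV[OF that]] that pV[OF that] \<open>j < 3\<close>
      unfolding mem_label_class by (auto simp: mod_Suc)
  next
    case False
    show ?thesis
    proof (cases "p v \<in> S")
      case True
      then show ?thesis using step[OF that False] S(2)[OF True] that pV[OF that] \<open>j < 3\<close>
        unfolding mem_label_class by (auto simp: mod_Suc)
    next
      case pv: False
      then show ?thesis
        using step[OF that False] step[OF pV[OF that] pv] that pV[OF that] pV[OF pV[OF that]] \<open>j < 3\<close>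
        unfolding mem_label_class by (auto simp: mod_Suc)
    qed
  qed
  then have "V \<subseteq> Gamma2 A ?Q"
    unfolding Gamma2_def out_nbrs_def using parent pV by blast
  moreover have "Gamma2 A ?Q \<subseteq> V"
    using QV AV unfolding Gamma2_def out_nbrs_def by blast
  ultimately show ?thesis using QV unfolding quasi_kernel_def by blast
qed

lemma sum_card_mod3_fibres:
  fixes f :: "'a \<Rightarrow> nat"
  assumes "finite W"
  shows "(\<Sum>j<3. card {v\<in>W. f v mod 3 = j}) = card W"
proof -
  have "(\<lambda>v. f v mod 3) ` W \<subseteq> {..<3}" by auto
  from sum.group[OF assms finite_lessThan this, where h = "\<lambda>_. 1::nat"] show ?thesis by simp
qed

lemma small_label_class:
  assumes "finite V" "S \<subseteq> V"
  shows "\<exists>j<3. 3 * card (label_class V S l j) \<le> card V + card S"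
proof (rule ccontr)
  assume "\<not> ?thesis"
  then have "card V + card S < 3 * card (label_class V S l j)" if "j < 3" for j
    using that by fastforce
  from this[of 0] this[of "Suc 0"] this[of "Suc (Suc 0)"]
  have "card V + card S < (\<Sum>j<3. card (label_class V S l j))"
    by (simp add: numeral_3_eq_3)
  also have "\<dots> \<le> (\<Sum>j<3. card {v\<in>V. l v mod 3 = j} + card {v\<in>S. (l v + 2) mod 3 = j})"
    unfolding label_class_def by (intro sum_mono card_Un_le)
  also have "\<dots> = card V + card S"
    using sum_card_mod3_fibres[OF finite_subset[OF assms(2,1)], of "\<lambda>v. l v + 2"]
    by (simp add: sum.distrib sum_card_mod3_fibres assms(1))
  finally show False by simp
qed

locale parent_map =
  fixes V :: "'a set" and A :: "('a \<times> 'a) set" and p :: "'a \<Rightarrow> 'a"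
  assumes finite_V: "finite V"
    and arcs_in_V: "A \<subseteq> V \<times> V"
    and loopless: "(v, v) \<notin> A"
    and oriented: "oriented A"
    and parent_arc: "v \<in> V \<Longrightarrow> (p v, v) \<in> A"
begin

lemma parent_in_V: "v \<in> V \<Longrightarrow> p v \<in> V"
  using parent_arc arcs_in_V by blast

lemma funpow_parent_in_V: "v \<in> V \<Longrightarrow> (p ^^ n) v \<in> V"
  by (induction n) (simp_all add: parent_in_V)

lemma parent_neq: "v \<in> V \<Longrightarrow> p v \<noteq> v"
  using parent_arc loopless by metis

lemma parent_parent_neq: "v \<in> V \<Longrightarrow> p (p v) \<noteq> v"
  using parent_arc[of v] parent_arc[OF parent_in_V, of v] oriented unfolding oriented_def by metis

lemma orbit_subset_V: "v \<in> V \<Longrightarrow> orbit p v \<subseteq> V"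
  unfolding orbit_altdef using funpow_parent_in_V by blast

lemma uadj_parent: "v \<in> V \<Longrightarrow> uadj A v (p v)"
  using parent_arc unfolding uadj_def by blast

lemma successively_uadj_funpow:
  "v \<in> V \<Longrightarrow> successively (uadj A) (map (\<lambda>i. (p ^^ i) v) [0..<n])"
  by (simp add: successively_conv_nth uadj_parent funpow_parent_in_V)

lemma exists_periodic_in_orbit:
  assumes "v \<in> V"
  shows "\<exists>y\<in>orbit p v. y \<in> orbit p y"
proof -
  have "(\<lambda>i. (p ^^ i) v) ` {0..card V} \<subseteq> V"
    using funpow_parent_in_V[OF assms] by blast
  then have "\<not> inj_on (\<lambda>i. (p ^^ i) v) {0..card V}"
    using card_inj_on_le[OF _ _ finite_V] by fastforce
  then obtain i j where "i < j" and eq: "(p ^^ i) v = (p ^^ j) v"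
    unfolding inj_on_def by (metis linorder_neqE_nat)
  have "(p ^^ (j - i)) ((p ^^ j) v) = (p ^^ (j - i)) ((p ^^ i) v)"
    using eq by simp
  also have "\<dots> = (p ^^ (j - i + i)) v"
    by (simp add: funpow_add)
  also have "\<dots> = (p ^^ j) v"
    using \<open>i < j\<close> by simp
  finally have "(p ^^ j) v = (p ^^ (j - i)) ((p ^^ j) v)" ..
  moreover have "0 < j - i" "0 < j" using \<open>i < j\<close> by simp_all
  ultimately show ?thesis
    unfolding orbit_altdef by blast
qed

lemma funpow_dist1_self_ge_3:
  assumes "y \<in> V" "y \<in> orbit p y"
  shows "3 \<le> funpow_dist1 p y y"
proof (rule ccontr)
  assume "\<not> ?thesis"
  then have "funpow_dist1 p y y = 1 \<or> funpow_dist1 p y y = 2" by linarith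
  then show False
    using funpow_dist1_prop[OF assms(2)] parent_neq[OF assms(1)] parent_parent_neq[OF assms(1)]
    by (auto simp: numeral_2_eq_2)
qed

lemma is_ucycle_orbit_list:
  assumes "y \<in> V" "y \<in> orbit p y"
  shows "is_ucycle A (orbit_list p y)"
proof -
  define k where "k = funpow_dist1 p y y"
  have k: "3 \<le> k" "(p ^^ k) y = y"
    using funpow_dist1_self_ge_3[OF assms] funpow_dist1_prop[OF assms(2)] by (simp_all add: k_def)
  have "p ((p ^^ (k - 1)) y) = y"
    using k funpow_apply_pred[of k p y] by simp
  moreover have "last (orbit_list p y) = (p ^^ (k - 1)) y" "hd (orbit_list p y) = y"
    using k by (simp_all add: orbit_list_conv[OF k_def] last_map hd_map)
  ultimately have "uadj A (last (orbit_list p y)) (hd (orbit_list p y))"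
    using uadj_parent[OF funpow_parent_in_V[OF assms(1)], of "k - 1"] by simp
  moreover have "successively (uadj A) (orbit_list p y)"
    unfolding orbit_list_conv[OF k_def] by (rule successively_uadj_funpow[OF assms(1)])
  moreover have "3 \<le> length (orbit_list p y)"
    using k by (simp add: orbit_list_conv[OF k_def])
  ultimately show ?thesis
    using distinct_orbit_list[OF assms(2)] by (intro is_ucycleI)
qed

lemma ucycle_through_arc:
  assumes arc: "(u, v) \<in> A" and not_parent: "u \<noteq> p v"
    and meet: "(p ^^ i) v = (p ^^ j) u"
  shows "\<exists>cs. is_ucycle A cs \<and> {u, v} \<in> cycle_edges cs"
proof -
  have "u \<in> V" "v \<in> V" using arc arcs_in_V by auto
  obtain a b where ab: "(p ^^ a) v = (p ^^ b) u"
    and first: "\<And>i j. (p ^^ i) v = (p ^^ j) u \<Longrightarrow> a + b \<le> i + j"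
    using ex_has_least_nat[of "\<lambda>(i, j). (p ^^ i) v = (p ^^ j) u" "(i, j)" "\<lambda>(i, j). i + j"] meet
    by fastforce
  define U where "U = map (\<lambda>i. (p ^^ i) u) [0..<Suc b]"
  define W where "W = rev (map (\<lambda>i. (p ^^ i) v) [0..<a])"
  have "2 \<le> a + b"
  proof (rule ccontr)
    assume "\<not> ?thesis"
    then consider "a = 0" "b = 0" | "a = 1" "b = 0" | "a = 0" "b = 1" by linarith
    then show False
      using ab arc loopless not_parent parent_arc[OF \<open>u \<in> V\<close>] oriented
      unfolding oriented_def by cases auto
  qed
  then have "3 \<le> length (U @ W)" by (simp add: U_def W_def)
  moreover have "distinct (U @ W)"
    unfolding U_def W_def using distinct_paths_to_first_meet[OF ab first] .
  moreover have "successively (uadj A) (U @ W)"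
  proof -
    have "uadj A (last U) (hd W)" if "a \<noteq> 0"
    proof -
      have "last U = p ((p ^^ (a - 1)) v)"
        using ab that funpow_apply_pred[of a p v] by (simp add: U_def)
      moreover have "hd W = (p ^^ (a - 1)) v"
        using that by (simp add: W_def hd_rev last_map)
      ultimately show ?thesis
        using uadj_parent[OF funpow_parent_in_V[OF \<open>v \<in> V\<close>]] uadj_def by metis
    qed
    moreover have "successively (uadj A) W"
      using successively_uadj_funpow[OF \<open>v \<in> V\<close>, of a] uadj_def
      unfolding W_def successively_rev by (metis (no_types, lifting) successively_mono)
    moreover have "successively (uadj A) U"
      unfolding U_def by (rule successively_uadj_funpow[OF \<open>u \<in> V\<close>])
    moreover have "W = [] \<longleftrightarrow> a = 0" by (simp add: W_def)
    ultimately show ?thesis unfolding successively_append_iff by blast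
  qed
  moreover have "last (U @ W) = v"
    using ab by (cases "a = 0") (auto simp: U_def W_def last_rev hd_map)
  moreover have "hd (U @ W) = u"
    by (simp add: U_def hd_map del: upt_Suc)
  ultimately show ?thesis
    using last_hd_in_cycle_edges[of "U @ W"] arc is_ucycleI[of "U @ W" A]
    by (metis insert_commute list.size(3) not_numeral_le_zero uadj_def)
qed

end

locale unicyclic_parent_map = parent_map +
  fixes c :: 'a
  assumes unique_cycle: "unique_cycle A"
    and root_in_V: "c \<in> V"
    and root_periodic: "c \<in> orbit p c"
begin

lemma cycle_edges_eq_root_orbit:
  assumes "is_ucycle A cs"
  shows "cycle_edges cs = (\<lambda>z. {z, p z}) ` orbit p c"
proof -
  obtain E where "{cycle_edges cs | cs. is_ucycle A cs} = {E}"
    using unique_cycle unfolding unique_cycle_def by (rule card_1_singletonE)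
  then have "cycle_edges cs = E" "cycle_edges (orbit_list p c) = E"
    using assms is_ucycle_orbit_list[OF root_in_V root_periodic] by blast+
  then show ?thesis using cycle_edges_orbit_list[OF root_periodic] by simp
qed

lemma root_in_orbit:
  assumes "v \<in> V"
  shows "c \<in> orbit p v"
proof -
  obtain y where y: "y \<in> orbit p v" "y \<in> orbit p y"
    using exists_periodic_in_orbit[OF assms] by blast
  then have "y \<in> V" using orbit_subset_V[OF assms] by blast
  have "{y, p y} \<in> cycle_edges (orbit_list p y)"
    using cycle_edges_orbit_list[OF y(2)] y(2) by blast
  then obtain z where "z \<in> orbit p c" "{y, p y} = {z, p z}"
    using cycle_edges_eq_root_orbit[OF is_ucycle_orbit_list[OF \<open>y \<in> V\<close> y(2)]] by auto
  then have "y \<in> orbit p c" by (metis doubleton_eq_iff orbit.step)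
  then have "c \<in> orbit p y" by (rule orbit_swap[OF root_periodic])
  then show ?thesis using y(1) by (rule orbit_trans)
qed

lemma arc_eq_parent:
  assumes arc: "(u, v) \<in> A"
  shows "u = p v"
proof (rule ccontr)
  assume "u \<noteq> p v"
  have "u \<in> V" "v \<in> V" using arc arcs_in_V by auto
  obtain i where "(p ^^ i) v = c"
    using root_in_orbit[OF \<open>v \<in> V\<close>] unfolding orbit_altdef by auto
  moreover obtain j where "(p ^^ j) u = c"
    using root_in_orbit[OF \<open>u \<in> V\<close>] unfolding orbit_altdef by auto
  ultimately obtain cs where "is_ucycle A cs" "{u, v} \<in> cycle_edges cs"
    using ucycle_through_arc[OF arc \<open>u \<noteq> p v\<close>] by metis
  then obtain z where "z \<in> orbit p c" "{u, v} = {z, p z}"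
    using cycle_edges_eq_root_orbit by auto
  moreover from this have "(p z, z) \<in> A"
    using parent_arc orbit_subset_V[OF root_in_V] by blast
  ultimately show False
    using arc oriented \<open>u \<noteq> p v\<close> unfolding oriented_def by (metis doubleton_eq_iff)
qed

abbreviation depth :: "'a \<Rightarrow> nat" where
  "depth v \<equiv> funpow_dist p v c"

text \<open>\<open>period\<close> is \<open>Suc (depth (p c))\<close> by definition of \<open>funpow_dist1\<close>; the simplifier uses this
  silently below.\<close>

abbreviation period :: nat where
  "period \<equiv> funpow_dist1 p c c"

lemma depth_root: "depth c = 0"
  by (simp add: funpow_dist_0)

lemma depth_step:
  assumes "v \<in> V" "v \<noteq> c"
  shows "depth v = Suc (depth (p v))"
  using funpow_dist_step[OF assms(2) root_in_orbit[OF assms(1)]] .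

lemma period_ge_3: "3 \<le> period"
  using funpow_dist1_self_ge_3[OF root_in_V root_periodic] .

lemma defect_labelling_depth:
  assumes "period mod 3 = 0"
  shows "defect_labelling V p {} depth"
proof -
  have "depth v mod 3 = (depth (p v) + 1) mod 3" if "v \<in> V" for v
    using depth_step[OF that] depth_root assms by (cases "v = c") auto
  then show ?thesis unfolding defect_labelling_def by auto
qed

lemma defect_labelling_depth_root:
  assumes "period mod 3 = 2"
  shows "defect_labelling V p {c} depth"
proof -
  have "depth c mod 3 = (depth (p c) + 2) mod 3"
    using depth_root assms by (simp add: mod_Suc)
  then show ?thesis
    using depth_step root_in_V parent_neq[OF root_in_V] unfolding defect_labelling_def by auto
qed

definition passes_through :: "'a \<Rightarrow> 'a \<Rightarrow> bool" where
  "passes_through w v \<longleftrightarrow> (\<exists>m\<le>depth v. (p ^^ m) v = w)"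

lemma passes_through_parent:
  assumes "v \<in> V" "v \<noteq> c" "v \<noteq> w"
  shows "passes_through w v \<longleftrightarrow> passes_through w (p v)"
proof
  assume "passes_through w v"
  then obtain m where m: "m \<le> Suc (depth (p v))" "(p ^^ m) v = w"
    unfolding passes_through_def depth_step[OF assms(1,2)] by blast
  with assms(3) obtain m' where "m = Suc m'" by (cases m) auto
  with m show "passes_through w (p v)"
    unfolding passes_through_def by (auto simp: funpow_Suc_right simp del: funpow.simps)
next
  assume "passes_through w (p v)"
  then obtain m where "m \<le> depth (p v)" "(p ^^ Suc m) v = w"
    unfolding passes_through_def by (auto simp: funpow_Suc_right simp del: funpow.simps)
  then show "passes_through w v"
    unfolding passes_through_def depth_step[OF assms(1,2)] by (metis Suc_le_mono)
qed

lemma depths_near_root: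
  assumes "4 \<le> period"
  defines "w \<equiv> (p ^^ (period - 2)) c"
  shows "w \<in> V" "p (p w) = c" "depth (p w) = 1" "depth w = 2" "passes_through w (p c)"
proof -
  show "w \<in> V" unfolding w_def using funpow_parent_in_V root_in_V by blast
  have "p w = (p ^^ (period - 1)) c"
    using funpow_apply_pred[of "period - 1" p c] assms(1) by (simp add: w_def numeral_2_eq_2)
  then show ppw: "p (p w) = c"
    using funpow_apply_pred[of period p c] funpow_dist1_prop[OF root_periodic] by simp
  have "w \<noteq> c" "p w \<noteq> c"
    using funpow_dist1_least[of "period - 2" p c c] funpow_dist1_least[of "period - 1" p c c]
      \<open>p w = _\<close> assms(1) unfolding w_def by simp_all
  then show "depth (p w) = 1" "depth w = 2"
    using depth_step[OF parent_in_V[OF \<open>w \<in> V\<close>]] depth_step[OF \<open>w \<in> V\<close>] ppw depth_root by simp_all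
  have "(p ^^ (period - 3)) (p c) = (p ^^ Suc (period - 3)) c"
    by (simp only: funpow_Suc_right o_apply)
  also have "Suc (period - 3) = period - 2" using assms(1) by simp
  finally have "(p ^^ (period - 3)) (p c) = w" unfolding w_def .
  moreover have "period - 3 \<le> depth (p c)" by simp
  ultimately show "passes_through w (p c)" unfolding passes_through_def by blast
qed

lemma defect_labelling_two_defects:
  assumes "period mod 3 = 1"
  shows "\<exists>l. defect_labelling V p {c, (p ^^ (period - 2)) c} l"
proof -
  define w where "w = (p ^^ (period - 2)) c"
  have "4 \<le> period" using period_ge_3 assms by presburger
  note w = depths_near_root[OF this, folded w_def]
  have "w \<noteq> c" "p w \<noteq> c" using w(3,4) depth_root by auto
  have "p c \<noteq> w" using w(4) \<open>4 \<le> period\<close> by auto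
  have "p (p w) \<noteq> w" using w(2) \<open>w \<noteq> c\<close> by simp
  \<comment> \<open>Raising by one the labels of the vertices whose path to \<open>c\<close> passes through \<open>w\<close> splits the
    jump of \<open>3\<close> at \<open>c\<close> into jumps of \<open>2\<close> at \<open>c\<close> and at \<open>w\<close>.\<close>
  define l where "l v = depth v + (if passes_through w v then 1 else 0)" for v
  have "\<not> passes_through w c"
    using \<open>w \<noteq> c\<close> unfolding passes_through_def depth_root by auto
  moreover have "passes_through w w"
    unfolding passes_through_def by (intro exI[of _ 0]) simp
  moreover have "\<not> passes_through w (p w)"
  proof -
    have "(p ^^ m) (p w) \<noteq> w" if "m \<le> 1" for m
      using that parent_neq[OF w(1)] \<open>p (p w) \<noteq> w\<close> by (cases m) auto
    then show ?thesis unfolding passes_through_def w(3) by blast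
  qed
  ultimately have "l c = 0" "l (p c) = period" "l w = 3" "l (p w) = 1"
    using w depth_root unfolding l_def by simp_all
  moreover have "l v = l (p v) + 1" if "v \<in> V" "v \<notin> {c, w}" for v
    using depth_step[of v] passes_through_parent[of v w] that unfolding l_def by simp
  ultimately have "defect_labelling V p {c, w} l"
    using assms root_in_V w(1) parent_neq[OF root_in_V] parent_neq[OF w(1)] \<open>p w \<noteq> c\<close> \<open>p c \<noteq> w\<close>
    unfolding defect_labelling_def by (auto simp: mod_Suc)
  then show ?thesis unfolding w_def by blast
qed

lemma exists_defect_labelling:
  "\<exists>S l. card S \<le> 2 \<and> defect_labelling V p S l"
proof -
  have "period mod 3 < 3" by simp
  then consider "period mod 3 = 0" | "period mod 3 = 1" | "period mod 3 = 2" by linarith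
  then show ?thesis
  proof cases
    case 1
    then show ?thesis using defect_labelling_depth by (intro exI[of _ "{}"]) auto
  next
    case 2
    moreover have "card {c, (p ^^ (period - 2)) c} \<le> 2" by (simp add: card_insert_if)
    ultimately show ?thesis using defect_labelling_two_defects by blast
  next
    case 3
    then show ?thesis using defect_labelling_depth_root by (intro exI[of _ "{c}"]) auto
  qed
qed

end

lemma quasi_kernel_cyc_arcs_card_ge:
  assumes "quasi_kernel {0..<n} (cyc_arcs n) Q"
  shows "n \<le> 3 * card Q"
proof -
  let ?succ = "\<lambda>i. (i + 1) mod n"
  have Q: "Q \<subseteq> {0..<n}" "Gamma2 (cyc_arcs n) Q = {0..<n}"
    using assms unfolding quasi_kernel_def by auto
  then have "finite Q" by (meson finite_atLeastLessThan finite_subset)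
  have out: "out_nbrs (cyc_arcs n) S \<subseteq> ?succ ` S" for S
    unfolding out_nbrs_def cyc_arcs_def by auto
  then have "out_nbrs (cyc_arcs n) (out_nbrs (cyc_arcs n) Q) \<subseteq> ?succ ` ?succ ` Q"
    by (meson image_mono order_trans)
  then have "{0..<n} \<subseteq> Q \<union> ?succ ` Q \<union> ?succ ` ?succ ` Q"
    using Q(2) out[of Q] unfolding Gamma2_def by blast
  then have "card {0..<n} \<le> card (Q \<union> ?succ ` Q \<union> ?succ ` ?succ ` Q)"
    by (intro card_mono) (use \<open>finite Q\<close> in auto)
  then have "n \<le> card (Q \<union> ?succ ` Q \<union> ?succ ` ?succ ` Q)" by simp
  also have "\<dots> \<le> card Q + card (?succ ` Q) + card (?succ ` ?succ ` Q)"
    by (meson card_Un_le add_mono le_trans order_refl)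
  also have "\<dots> \<le> 3 * card Q"
    using card_image_le[OF \<open>finite Q\<close>, of ?succ]
      card_image_le[OF finite_imageI[OF \<open>finite Q\<close>, of ?succ], of ?succ]
    by linarith
  finally show ?thesis .
qed

lemma quasi_kernel_cyc_arcs_card:
  assumes "n mod 3 = 1" "quasi_kernel {0..<n} (cyc_arcs n) Q"
  shows "n + 2 \<le> 3 * card Q"
  using quasi_kernel_cyc_arcs_card_ge[OF assms(2)] assms(1) by presburger

theorem mainTheorem8:
  shows "(\<forall>(V :: 'a set) A. digraph V A \<and> oriented A \<and> uconnected V A \<and> unique_cycle A
            \<and> (\<forall>v\<in>V. \<not> source V A v)
          \<longrightarrow> (\<exists>Q. quasi_kernel V A Q \<and> 3 * card Q \<le> card V + 2))
       \<and> (\<forall>n::nat. n \<ge> 4 \<and> n mod 3 = 1 \<longrightarrow>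
           (\<forall>Q. quasi_kernel {0..<n} (cyc_arcs n) Q \<longrightarrow> 3 * card Q \<ge> n + 2))"
proof (intro conjI allI impI)
  fix V :: "'a set" and A
  assume "digraph V A \<and> oriented A \<and> uconnected V A \<and> unique_cycle A
            \<and> (\<forall>v\<in>V. \<not> source V A v)"
  \<comment> \<open>Connectivity is only used for \<open>V \<noteq> {}\<close>: without sources, every component contains a cycle.\<close>
  then have G: "finite V" "A \<subseteq> V \<times> V" "\<And>v. (v, v) \<notin> A" "oriented A" "unique_cycle A" "V \<noteq> {}"
    and in_nbr: "\<And>v. v \<in> V \<Longrightarrow> \<exists>u. (u, v) \<in> A"
    unfolding digraph_def uconnected_def source_def by auto
  define p where "p v = (SOME u. (u, v) \<in> A)" for v
  interpret parent_map V A p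
    using G in_nbr by unfold_locales (auto simp: p_def intro: someI_ex)
  obtain c where "c \<in> V" "c \<in> orbit p c"
    using exists_periodic_in_orbit orbit_subset_V \<open>V \<noteq> {}\<close> by blast
  interpret unicyclic_parent_map V A p c
    by unfold_locales (fact G \<open>c \<in> V\<close> \<open>c \<in> orbit p c\<close>)+
  obtain S l where "card S \<le> 2" and lab: "defect_labelling V p S l"
    using exists_defect_labelling by blast
  moreover obtain j where "j < 3" "3 * card (label_class V S l j) \<le> card V + card S"
    using small_label_class[OF finite_V] lab unfolding defect_labelling_def by blast
  ultimately show "\<exists>Q. quasi_kernel V A Q \<and> 3 * card Q \<le> card V + 2"
    using quasi_kernel_label_class[OF arcs_in_V parent_arc arc_eq_parent lab] by fastforce
next
  fix n :: nat and Q
  assume "4 \<le> n \<and> n mod 3 = 1" and "quasi_kernel {0..<n} (cyc_arcs n) Q"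
  then show "n + 2 \<le> 3 * card Q" using quasi_kernel_cyc_arcs_card by blast
qed

end
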